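(* Let $n,d \geq 1$. The morphism $\mathbb{P}^1\times\mathbb{P}^n \to \mathbb{P}^{2(n+1)}$ given by \[[x_0:x_1]\times[y_0:\ldots:y_n] \mapsto [x_0^dy_0 : x_0^dy_1 : \ldots : x_0^dy_{n-1} : x_0^dy_n : x_1^dy_n : dx_0x_1^{d-1}y_0 : x_1^dy_0 + dx_0x_1^{d-1}y_1 : x_1^dy_1 + dx_0x_1^{d-1}y_2 : \ldots : x_1^dy_{n-1} + dx_0x_1^{d-1}y_n]\] is injective. In particular, $\operatorname{injdim}(\mathbb{P}^1\times\mathbb{P}^n,\mathcal{O}(d,1)) \leq 2(n+1)$.
   Context: Over $\mathbb{C}$. For a line bundle $\mathscr{L}$ on a projective variety $X$ and a nonzero subspace $V \subseteq H^0(X,\mathscr{L})$, $\varphi_V \colon X \dashrightarrow \mathbb{P}(V^* )$ is the rational map given by the sections in $V$; $\operatorname{injdim}(X,\mathscr{L}) := \inf\{\dim V - 1 : \varphi_V \text{ is an injective morphism}\}$. *)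

theory Defs
  imports "HOL-Analysis.Analysis" "HOL-Library.Extended_Nat" "HOL-Library.Function_Algebras"
begin

(* Points of P^1: pairs (x0,x1) \<noteq> (0,0); points of P^n: y :: nat \<Rightarrow> complex,
   only the coordinates y 0, ..., y n matter. *)
definition nz1 :: "complex \<times> complex \<Rightarrow> bool" where
  "nz1 x \<longleftrightarrow> x \<noteq> (0, 0)"

definition nzn :: "nat \<Rightarrow> (nat \<Rightarrow> complex) \<Rightarrow> bool" where
  "nzn n y \<longleftrightarrow> (\<exists>j\<le>n. y j \<noteq> 0)"

definition same_pt1 :: "complex \<times> complex \<Rightarrow> complex \<times> complex \<Rightarrow> bool" where
  "same_pt1 x x' \<longleftrightarrow> (\<exists>a. a \<noteq> 0 \<and> fst x = a * fst x' \<and> snd x = a * snd x')"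

definition same_ptn :: "nat \<Rightarrow> (nat \<Rightarrow> complex) \<Rightarrow> (nat \<Rightarrow> complex) \<Rightarrow> bool" where
  "same_ptn n y y' \<longleftrightarrow> (\<exists>b. b \<noteq> 0 \<and> (\<forall>j\<le>n. y j = b * y' j))"

(* The explicit map P^1 x P^n \<rightarrow> P^(2(n+1)), coordinates indexed by 0..2n+2 *)
definition Fmap :: "nat \<Rightarrow> nat \<Rightarrow> complex \<times> complex \<Rightarrow> (nat \<Rightarrow> complex) \<Rightarrow> nat \<Rightarrow> complex" where
  "Fmap d n x y k =
     (let x0 = fst x; x1 = snd x in
      if k \<le> n then x0 ^ d * y k
      else if k = n + 1 then x1 ^ d * y n
      else if k = n + 2 then of_nat d * x0 * x1 ^ (d - 1) * y 0
      else x1 ^ d * y (k - (n + 3)) + of_nat d * x0 * x1 ^ (d - 1) * y (k - (n + 3) + 1))"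

(* Global sections of O(d,1) on P^1 x P^n: bihomogeneous forms of bidegree (d,1),
   given by coefficient arrays s (i,j) of the monomial x0^(d-i) x1^i y_j, i \<le> d, j \<le> n. *)
definition H0 :: "nat \<Rightarrow> nat \<Rightarrow> (nat \<times> nat \<Rightarrow> complex) set" where
  "H0 d n = {s. \<forall>i j. (i > d \<or> j > n) \<longrightarrow> s (i, j) = 0}"

definition ev_sec :: "nat \<Rightarrow> nat \<Rightarrow> (nat \<times> nat \<Rightarrow> complex) \<Rightarrow> complex \<times> complex \<Rightarrow> (nat \<Rightarrow> complex) \<Rightarrow> complex" where
  "ev_sec d n s x y = (\<Sum>i\<le>d. \<Sum>j\<le>n. s (i, j) * fst x ^ (d - i) * snd x ^ i * y j)"

definition cscale :: "complex \<Rightarrow> (nat \<times> nat \<Rightarrow> complex) \<Rightarrow> (nat \<times> nat \<Rightarrow> complex)" where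
  "cscale c s = (\<lambda>p. c * s p)"

(* \<phi>_V is an injective morphism: V has no base points, and the induced map
   P \<mapsto> (s \<mapsto> s(P)) into P(V^* ) is injective. *)
definition inj_morphism :: "nat \<Rightarrow> nat \<Rightarrow> (nat \<times> nat \<Rightarrow> complex) set \<Rightarrow> bool" where
  "inj_morphism d n V \<longleftrightarrow>
     (\<forall>x y. nz1 x \<and> nzn n y \<longrightarrow> (\<exists>s\<in>V. ev_sec d n s x y \<noteq> 0)) \<and>
     (\<forall>x y x' y'. nz1 x \<and> nzn n y \<and> nz1 x' \<and> nzn n y' \<longrightarrow>
        (\<exists>c. c \<noteq> 0 \<and> (\<forall>s\<in>V. ev_sec d n s x y = c * ev_sec d n s x' y')) \<longrightarrow>
        same_pt1 x x' \<and> same_ptn n y y')"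

definition injdim_P1Pn :: "nat \<Rightarrow> nat \<Rightarrow> enat" where
  "injdim_P1Pn d n =
     (INF V \<in> {V. V \<subseteq> H0 d n \<and> module.subspace cscale V \<and> V \<noteq> {\<lambda>_. 0} \<and> inj_morphism d n V}.
        enat (vector_space.dim cscale V - 1))"

end

(*
  Write A = x0^d, B = x1^d, C = d x0 x1^(d-1) and Y(t) = y0 + y1 t + ... + yn t^n. The first
  n + 1 coordinates of the map are A Y, the remaining n + 2 are the coefficients of (C + B t) Y(t).
  If two images are proportional and x0 <> 0, comparing A Y shows that Y' is a multiple of Y;
  cancelling the nonzero polynomial Y then gives (B, C) = (A / A') (B', C'). For t = x1 / x0 these
  two equations read t^d = t'^d and t^(d-1) = t'^(d-1), which force t = t'. If x0 = 0 the image
  is (0, x1^d Y, 0), which determines Y up to a scalar. All coordinates are sections of O(d,1),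
  so their span witnesses the bound on injdim.
*)

theory Submission
  imports Defs
begin

text \<open>The hypotheses say that (v + u t) Y(t) = 0 for the polynomial Y with coefficients y.\<close>

lemma linear_factor_cancel:
  fixes u v :: "'a::idom" and y :: "nat \<Rightarrow> 'a"
  assumes top: "u * y n = 0" and bot: "v * y 0 = 0"
    and mid: "\<And>j. j < n \<Longrightarrow> u * y j + v * y (Suc j) = 0"
    and nz: "\<exists>j\<le>n. y j \<noteq> 0"
  shows "u = 0 \<and> v = 0"
proof -
  have "u = 0"
  proof (rule ccontr)
    assume "u \<noteq> 0"
    have vanish: "y (n - i) = 0" if "i \<le> n" for i
      using that
    proof (induction i)
      case 0
      then show ?case using top \<open>u \<noteq> 0\<close> by simp
    next
      case (Suc i)
      then have "n - Suc i < n" "Suc (n - Suc i) = n - i" by auto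
      with mid[of "n - Suc i"] Suc \<open>u \<noteq> 0\<close> show ?case by simp
    qed
    obtain j where "j \<le> n" "y j \<noteq> 0" using nz by blast
    moreover have "y (n - (n - j)) = 0" by (rule vanish) simp
    ultimately show False by simp
  qed
  moreover have "v * y k = 0" if "k \<le> n" for k
  proof (cases k)
    case 0
    with bot show ?thesis by simp
  next
    case (Suc j)
    with mid[of j] that \<open>u = 0\<close> show ?thesis by simp
  qed
  ultimately show ?thesis using nz by auto
qed

lemma eq_if_power_Suc_eq_and_power_eq:
  fixes p q :: "'a::idom"
  assumes "p ^ Suc m = q ^ Suc m" and "p ^ m = q ^ m"
  shows "p = q"
proof (cases "p ^ m = 0")
  case True
  then have "m \<noteq> 0" by (metis power_0 one_neq_zero)
  moreover have "q ^ m = 0" using True assms(2) by simp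
  ultimately show ?thesis using True by simp
next
  case False
  have "p * p ^ m = q * p ^ m" using assms by (simp only: power_Suc)
  with False show ?thesis by (metis mult_right_cancel)
qed

lemma proportional_coefficients_if_products_proportional:
  fixes A B C A' B' C' c :: "'a::field"
  assumes "A \<noteq> 0" and nz: "\<exists>j\<le>n. y j \<noteq> 0"
    and low: "\<And>k. k \<le> n \<Longrightarrow> A * y k = c * (A' * y' k)"
    and top: "B * y n = c * (B' * y' n)" and bot: "C * y 0 = c * (C' * y' 0)"
    and mid: "\<And>j. j < n \<Longrightarrow> B * y j + C * y (Suc j) = c * (B' * y' j + C' * y' (Suc j))"
  shows "A' * B = A * B' \<and> A' * C = A * C'"
proof -
  obtain j where j: "j \<le> n" "y j \<noteq> 0" using nz by blast
  have "A' \<noteq> 0" using low[OF j(1)] j(2) \<open>A \<noteq> 0\<close> by auto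
  define r where "r = A / A'"
  have cy: "c * y' k = r * y k" if "k \<le> n" for k
    using low[OF that] \<open>A' \<noteq> 0\<close> unfolding r_def by (simp add: field_simps)
  have "B - r * B' = 0 \<and> C - r * C' = 0"
  proof (rule linear_factor_cancel[OF _ _ _ nz])
    show "(B - r * B') * y n = 0" using top cy[of n] by (simp add: algebra_simps)
    show "(C - r * C') * y 0 = 0" using bot cy[of 0] by (simp add: algebra_simps)
    show "(B - r * B') * y j + (C - r * C') * y (Suc j) = 0" if "j < n" for j
      using mid[OF that] cy[of j] cy[of "Suc j"] that by (simp add: algebra_simps)
  qed
  then show ?thesis using \<open>A' \<noteq> 0\<close> unfolding r_def by (simp add: field_simps)
qed

lemma same_ptn_if_scaled:
  assumes "e \<noteq> 0" "f \<noteq> 0" "c \<noteq> 0" and "\<And>k. k \<le> n \<Longrightarrow> e * y k = c * (f * y' k)"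
  shows "same_ptn n y y'"
  unfolding same_ptn_def
proof (intro exI[of _ "c * f / e"] conjI allI impI)
  show "c * f / e \<noteq> 0" using assms(1-3) by simp
  show "y k = c * f / e * y' k" if "k \<le> n" for k
    using assms(4)[OF that] assms(1) by (simp add: field_simps)
qed

lemma same_pt1_if_powers_proportional:
  fixes a b a' b' :: complex
  assumes "a \<noteq> 0" "a' \<noteq> 0"
    and "a' ^ Suc m * b ^ Suc m = a ^ Suc m * b' ^ Suc m"
    and "a' ^ Suc m * (a * b ^ m) = a ^ Suc m * (a' * b' ^ m)"
  shows "same_pt1 (a, b) (a', b')"
proof -
  have "(a' * b) ^ Suc m = (a * b') ^ Suc m"
    using assms(3) by (simp only: power_mult_distrib)
  moreover have "(a * a') * (a' * b) ^ m = (a * a') * (a * b') ^ m"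
    using assms(4) by (simp add: power_mult_distrib algebra_simps)
  then have "(a' * b) ^ m = (a * b') ^ m" using assms(1,2) by simp
  ultimately have "a' * b = a * b'" by (rule eq_if_power_Suc_eq_and_power_eq)
  then show ?thesis unfolding same_pt1_def using assms(1,2)
    by (intro exI[of _ "a / a'"]) (simp add: field_simps)
qed

lemma Fmap_base_point_free:
  assumes "d \<ge> 1" "nz1 x" "nzn n y"
  shows "\<exists>k\<le>2 * n + 2. Fmap d n x y k \<noteq> 0"
proof -
  obtain a b where x: "x = (a, b)" by fastforce
  obtain j where j: "j \<le> n" "y j \<noteq> 0" using assms(3) unfolding nzn_def by blast
  show ?thesis
  proof (cases "a = 0")
    case False
    then have "Fmap d n x y j \<noteq> 0" using j by (simp add: Fmap_def x)
    then show ?thesis using j by (intro exI[of _ j]) auto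
  next
    case True
    then have "b \<noteq> 0" using assms(2) by (simp add: nz1_def x)
    show ?thesis
    proof (cases "j = n")
      case True
      then have "Fmap d n x y (n + 1) \<noteq> 0" using j \<open>b \<noteq> 0\<close> by (simp add: Fmap_def x)
      then show ?thesis by (intro exI[of _ "n + 1"]) auto
    next
      case False
      then have "Fmap d n x y (n + 3 + j) \<noteq> 0" using j \<open>b \<noteq> 0\<close> \<open>a = 0\<close> by (simp add: Fmap_def x)
      then show ?thesis using j False by (intro exI[of _ "n + 3 + j"]) auto
    qed
  qed
qed

lemma Fmap_injective:
  assumes "d \<ge> 1" and nx: "nz1 x" "nz1 x'" and ny: "nzn n y" "nzn n y'" and "c \<noteq> 0"
    and F: "\<And>k. k \<le> 2 * n + 2 \<Longrightarrow> Fmap d n x y k = c * Fmap d n x' y' k"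
  shows "same_pt1 x x' \<and> same_ptn n y y'"
proof -
  obtain m where d: "d = Suc m" using assms(1) by (cases d) auto
  obtain a b a' b' where x: "x = (a, b)" "x' = (a', b')" by fastforce
  have low: "a ^ d * y k = c * (a' ^ d * y' k)" if "k \<le> n" for k
    using F[of k] that by (simp add: Fmap_def x)
  have top: "b ^ d * y n = c * (b' ^ d * y' n)"
    using F[of "n + 1"] by (simp add: Fmap_def x)
  have bot: "(of_nat d * a * b ^ m) * y 0 = c * ((of_nat d * a' * b' ^ m) * y' 0)"
    using F[of "n + 2"] by (simp add: Fmap_def x d)
  have mid: "b ^ d * y j + (of_nat d * a * b ^ m) * y (Suc j)
      = c * (b' ^ d * y' j + (of_nat d * a' * b' ^ m) * y' (Suc j))" if "j < n" for j
    using F[of "n + 3 + j"] that by (simp add: Fmap_def x d)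
  obtain j where j: "j \<le> n" "y j \<noteq> 0" using ny(1) unfolding nzn_def by blast
  obtain j' where j': "j' \<le> n" "y' j' \<noteq> 0" using ny(2) unfolding nzn_def by blast
  show ?thesis
  proof (cases "a = 0")
    case True
    then have "a' = 0" using low[OF j'(1)] j'(2) \<open>c \<noteq> 0\<close> by (auto simp: d)
    with True nx have "b \<noteq> 0" "b' \<noteq> 0" by (auto simp: nz1_def x)
    have "b ^ d * y k = c * (b' ^ d * y' k)" if "k \<le> n" for k
      using top mid[of k] that True \<open>a' = 0\<close> by (cases "k = n") auto
    with \<open>b \<noteq> 0\<close> \<open>b' \<noteq> 0\<close> \<open>c \<noteq> 0\<close> have "same_ptn n y y'"
      by (intro same_ptn_if_scaled[of "b ^ d" "b' ^ d" c n y y']) auto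
    moreover have "same_pt1 x x'" unfolding same_pt1_def x
      using True \<open>a' = 0\<close> \<open>b \<noteq> 0\<close> \<open>b' \<noteq> 0\<close> by (intro exI[of _ "b / b'"]) simp
    ultimately show ?thesis by blast
  next
    case False
    then have "a' \<noteq> 0" using low[OF j(1)] j(2) by (auto simp: d)
    have "a' ^ d * b ^ d = a ^ d * b' ^ d
        \<and> a' ^ d * (of_nat d * a * b ^ m) = a ^ d * (of_nat d * a' * b' ^ m)"
      using ny(1) unfolding nzn_def
      by (intro proportional_coefficients_if_products_proportional[of "a ^ d" n y c _ y' "b ^ d"])
        (use False low top bot mid in auto)
    then have "a' ^ Suc m * b ^ Suc m = a ^ Suc m * b' ^ Suc m"
        "a' ^ Suc m * (a * b ^ m) = a ^ Suc m * (a' * b' ^ m)"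
      unfolding d by (auto simp: ac_simps simp del: of_nat_Suc)
    then have "same_pt1 x x'"
      unfolding x by (rule same_pt1_if_powers_proportional[OF False \<open>a' \<noteq> 0\<close>])
    moreover have "same_ptn n y y'"
      using False \<open>a' \<noteq> 0\<close> \<open>c \<noteq> 0\<close> low by (intro same_ptn_if_scaled[of "a ^ d" "a' ^ d" c n y y']) auto
    ultimately show ?thesis ..
  qed
qed

interpretation sections: vector_space cscale
  by unfold_locales (auto simp: cscale_def fun_eq_iff algebra_simps)

lemma H0_subspace: "sections.subspace (H0 d n)"
  unfolding sections.subspace_def H0_def cscale_def by auto

lemma ev_sec_add: "ev_sec d n (s + t) x y = ev_sec d n s x y + ev_sec d n t x y"
  unfolding ev_sec_def by (simp add: sum.distrib algebra_simps)

definition monomial_section :: "nat \<Rightarrow> nat \<Rightarrow> complex \<Rightarrow> nat \<times> nat \<Rightarrow> complex" where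
  "monomial_section i j c = (\<lambda>p. if p = (i, j) then c else 0)"

lemma monomial_section_in_H0: "i \<le> d \<Longrightarrow> j \<le> n \<Longrightarrow> monomial_section i j c \<in> H0 d n"
  unfolding H0_def monomial_section_def by auto

lemma ev_sec_monomial_section:
  assumes "i \<le> d" "j \<le> n"
  shows "ev_sec d n (monomial_section i j c) x y = c * fst x ^ (d - i) * snd x ^ i * y j"
proof -
  have pointwise: "monomial_section i j c (i', j') * fst x ^ (d - i') * snd x ^ i' * y j'
      = (if j' = j then if i' = i then c * fst x ^ (d - i) * snd x ^ i * y j else 0 else 0)" for i' j'
    by (simp add: monomial_section_def)
  show ?thesis unfolding ev_sec_def pointwise using assms by simp
qed

definition Fmap_section :: "nat \<Rightarrow> nat \<Rightarrow> nat \<Rightarrow> nat \<times> nat \<Rightarrow> complex" where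
  "Fmap_section d n k =
     (if k \<le> n then monomial_section 0 k 1
      else if k = n + 1 then monomial_section d n 1
      else if k = n + 2 then monomial_section (d - 1) 0 (of_nat d)
      else monomial_section d (k - (n + 3)) 1 + monomial_section (d - 1) (k - (n + 3) + 1) (of_nat d))"

lemma Fmap_section_in_H0: "k \<le> 2 * n + 2 \<Longrightarrow> Fmap_section d n k \<in> H0 d n"
  using H0_subspace[of d n]
  by (auto simp: Fmap_section_def intro!: monomial_section_in_H0 sections.subspace_add)

lemma ev_sec_Fmap_section:
  "d \<ge> 1 \<Longrightarrow> k \<le> 2 * n + 2 \<Longrightarrow> ev_sec d n (Fmap_section d n k) x y = Fmap d n x y k"
  by (auto simp: Fmap_section_def Fmap_def Let_def ev_sec_monomial_section ev_sec_add)

lemma inj_morphism_mono: "inj_morphism d n S \<Longrightarrow> S \<subseteq> V \<Longrightarrow> inj_morphism d n V"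
  unfolding inj_morphism_def by (meson subsetD)

lemma inj_morphism_Fmap_sections:
  assumes "d \<ge> 1"
  shows "inj_morphism d n (Fmap_section d n ` {..2 * n + 2})"
  unfolding inj_morphism_def
proof (rule conjI; intro allI impI)
  fix x y assume "nz1 x \<and> nzn n y"
  then obtain k where "k \<le> 2 * n + 2" "Fmap d n x y k \<noteq> 0"
    using Fmap_base_point_free[OF assms] by blast
  then show "\<exists>s\<in>Fmap_section d n ` {..2 * n + 2}. ev_sec d n s x y \<noteq> 0"
    by (intro bexI[of _ "Fmap_section d n k"]) (auto simp: ev_sec_Fmap_section[OF assms])
next
  fix x y x' y'
  assume pts: "nz1 x \<and> nzn n y \<and> nz1 x' \<and> nzn n y'"
    and "\<exists>c. c \<noteq> 0 \<and> (\<forall>s\<in>Fmap_section d n ` {..2 * n + 2}. ev_sec d n s x y = c * ev_sec d n s x' y')"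
  then obtain c where "c \<noteq> 0"
    and "\<forall>k\<le>2 * n + 2. ev_sec d n (Fmap_section d n k) x y = c * ev_sec d n (Fmap_section d n k) x' y'"
    by auto
  with pts show "same_pt1 x x' \<and> same_ptn n y y'"
    by (intro Fmap_injective[OF assms]) (auto simp: ev_sec_Fmap_section[OF assms])
qed

lemma injdim_P1Pn_le_card:
  assumes "S \<subseteq> H0 d n" "finite S" "inj_morphism d n S"
  shows "injdim_P1Pn d n \<le> enat (card S - 1)"
proof -
  define V where "V = sections.span S"
  have "S \<subseteq> V" unfolding V_def by (rule sections.span_superset)
  have "nz1 (1, 0)" "nzn n (\<lambda>_. 1)" by (auto simp: nz1_def nzn_def)
  then obtain s where "s \<in> S" "ev_sec d n s (1, 0) (\<lambda>_. 1) \<noteq> 0"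
    using assms(3) unfolding inj_morphism_def by blast
  then have "V \<noteq> {\<lambda>_. 0}" using \<open>S \<subseteq> V\<close> by (auto simp: ev_sec_def)
  moreover have "V \<subseteq> H0 d n" unfolding V_def by (rule sections.span_minimal[OF assms(1) H0_subspace])
  moreover have "sections.subspace V" unfolding V_def by (rule sections.subspace_span)
  moreover have "inj_morphism d n V" using assms(3) \<open>S \<subseteq> V\<close> by (rule inj_morphism_mono)
  ultimately have "injdim_P1Pn d n \<le> enat (sections.dim V - 1)"
    unfolding injdim_P1Pn_def by (intro INF_lower) simp
  moreover have "sections.dim V \<le> card S"
    unfolding V_def using order_refl assms(2) by (rule sections.dim_le_card)
  ultimately show ?thesis by (simp add: order_trans)
qed

theorem theorem4p6:
  fixes n d :: nat
  assumes "n \<ge> 1" and "d \<ge> 1"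
  shows "(\<forall>x y. nz1 x \<and> nzn n y \<longrightarrow> (\<exists>k\<le>2 * n + 2. Fmap d n x y k \<noteq> 0))
     \<and> (\<forall>x y x' y'. nz1 x \<and> nzn n y \<and> nz1 x' \<and> nzn n y' \<longrightarrow>
          (\<exists>c. c \<noteq> 0 \<and> (\<forall>k\<le>2 * n + 2. Fmap d n x y k = c * Fmap d n x' y' k)) \<longrightarrow>
          same_pt1 x x' \<and> same_ptn n y y')
     \<and> injdim_P1Pn d n \<le> enat (2 * (n + 1))"
proof (intro conjI)
  show "\<forall>x y. nz1 x \<and> nzn n y \<longrightarrow> (\<exists>k\<le>2 * n + 2. Fmap d n x y k \<noteq> 0)"
    using Fmap_base_point_free[OF assms(2)] by blast
  show "\<forall>x y x' y'. nz1 x \<and> nzn n y \<and> nz1 x' \<and> nzn n y' \<longrightarrow>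
      (\<exists>c. c \<noteq> 0 \<and> (\<forall>k\<le>2 * n + 2. Fmap d n x y k = c * Fmap d n x' y' k)) \<longrightarrow>
      same_pt1 x x' \<and> same_ptn n y y'"
    using Fmap_injective[OF assms(2)] by blast
  define S where "S = Fmap_section d n ` {..2 * n + 2}"
  have "inj_morphism d n S" unfolding S_def by (rule inj_morphism_Fmap_sections[OF assms(2)])
  moreover have "S \<subseteq> H0 d n" unfolding S_def using Fmap_section_in_H0 by blast
  ultimately have "injdim_P1Pn d n \<le> enat (card S - 1)"
    by (intro injdim_P1Pn_le_card) (auto simp: S_def)
  also have "\<dots> \<le> enat (2 * (n + 1))"
    using card_image_le[of "{..2 * n + 2}" "Fmap_section d n"] unfolding S_def by simp
  finally show "injdim_P1Pn d n \<le> enat (2 * (n + 1))" .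
qed

end
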